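(* Let $f$ be a noisy process with noise variance $\sigma^2>0$ and assume $V:=\sup_{x\in\mathbb R}\mathbb E[(f^{\mathrm s}(x))^2]<\infty$. Then for every nonempty bounded collection of data sets $\tilde{\mathcal D}\subseteq\mathcal D$, $$1\le\sup_{D\in\tilde{\mathcal D}}\ \sup_{g\in\mathbb R^{\mathbb R}}\pi'_f(D)(g)\le 2\exp\Big(\frac{2\|\tilde{\mathcal D}\|_\infty^2V}{\sigma^2}+\frac{\|\tilde{\mathcal D}\|_\infty^3}{\sigma^2}\Big).$$
   Context: A stochastic process $f$ on $\mathbb R$ is noisy with noise variance $\sigma^2>0$ if $f=f^{\mathrm s}+f^{\mathrm n}$ with $f^{\mathrm s},f^{\mathrm n}$ independent, $f^{\mathrm s}$ (smooth part) having continuous sample paths, and $(f^{\mathrm n}(x_1),\dots,f^{\mathrm n}(x_n))\sim\mathcal N(\mathbf 0,\sigma^2\mathbf I_n)$ for pairwise distinct $x_i$. Data sets: $\mathcal D=\bigcup_{n\ge0}(\mathbb R\times\mathbb R)^n$; a data set $D=((x_i,y_i))_{i=1}^n$ is written $D=(\mathbf x,\mathbf y)$ with $\mathbf x,\mathbf y\in\mathbb R^n$ (the empty data set is allowed). For $D=(\mathbf x,\mathbf y)$ and $g:\mathbb R\to\mathbb R$ define $$\pi'_f(D)(g)=\frac{\mathcal N(\mathbf y\mid g(\mathbf x),\sigma^2\mathbf I)}{\mathbb E_{f^{\mathrm s}}[\mathcal N(\mathbf y\mid f^{\mathrm s}(\mathbf x),\sigma^2\mathbf I)]}$$ (with value $1$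 for $D=\varnothing$), where $g(\mathbf x)=(g(x_1),\dots,g(x_n))$ and $\mathcal N(\cdot\mid\mathbf m,\mathbf K)$ is the Gaussian density; this is the Radon–Nikodym derivative of the posterior of $f^{\mathrm s}$ given the noisy observations $D$ with respect to the prior law of $f^{\mathrm s}$. For $\tilde{\mathcal D}\subseteq\mathcal D$ let $\|\tilde{\mathcal D}\|_\infty=\sup_{(\mathbf x,\mathbf y)\in\tilde{\mathcal D}}\sum_{i=1}^{|\mathbf x|}(|y_i|\vee1)$; $\tilde{\mathcal D}$ is bounded if $\|\tilde{\mathcal D}\|_\infty<\infty$. *)

theory Defs
  imports "HOL-Probability.Probability"
begin

type_synonym dataset = "(real \<times> real) list"

text \<open>Gaussian likelihood N(y | g(x), sigma^2 I) for D = (x,y), written as the product of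
  the one-dimensional normal densities (identity covariance).\<close>
definition gauss_lik :: "real \<Rightarrow> dataset \<Rightarrow> (real \<Rightarrow> real) \<Rightarrow> real" where
  "gauss_lik \<sigma> D g = prod_list (map (\<lambda>(x, y). normal_density y \<sigma> (g x)) D)"

text \<open>pi'_f(D)(g): Radon--Nikodym derivative of the posterior of the smooth part S
  (random function on the probability space M) w.r.t. its prior.\<close>
definition post_rn :: "'a measure \<Rightarrow> ('a \<Rightarrow> real \<Rightarrow> real) \<Rightarrow> real \<Rightarrow> dataset \<Rightarrow> (real \<Rightarrow> real) \<Rightarrow> real" where
  "post_rn M S \<sigma> D g =
     (if D = [] then 1 else gauss_lik \<sigma> D g / (\<integral>\<omega>. gauss_lik \<sigma> D (S \<omega>) \<partial>M))"

definition data_size :: "dataset \<Rightarrow> real" where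
  "data_size D = sum_list (map (\<lambda>(x, y). max \<bar>y\<bar> 1) D)"

definition data_norm :: "dataset set \<Rightarrow> real" where
  "data_norm Dt = Sup (data_size ` Dt)"

definition bounded_data :: "dataset set \<Rightarrow> bool" where
  "bounded_data Dt \<longleftrightarrow> bdd_above (data_size ` Dt)"

definition noisy_process ::
  "'a measure \<Rightarrow> ('a \<Rightarrow> real \<Rightarrow> real) \<Rightarrow> ('a \<Rightarrow> real \<Rightarrow> real) \<Rightarrow> ('a \<Rightarrow> real \<Rightarrow> real) \<Rightarrow> real \<Rightarrow> bool" where
  "noisy_process M f S N \<sigma> \<longleftrightarrow>
     prob_space M \<and> \<sigma> > 0 \<and>
     (\<forall>\<omega>\<in>space M. \<forall>x. f \<omega> x = S \<omega> x + N \<omega> x) \<and>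
     (\<forall>\<omega>\<in>space M. continuous_on UNIV (S \<omega>)) \<and>
     (\<forall>x. (\<lambda>\<omega>. S \<omega> x) \<in> borel_measurable M) \<and>
     (\<forall>x. (\<lambda>\<omega>. N \<omega> x) \<in> borel_measurable M) \<and>
     prob_space.indep_var M (PiM UNIV (\<lambda>_. borel)) S (PiM UNIV (\<lambda>_. borel)) N \<and>
     (\<forall>xs :: real list. distinct xs \<longrightarrow>
        prob_space.indep_vars M (\<lambda>_. borel) (\<lambda>i \<omega>. N \<omega> (xs ! i)) {..<length xs}) \<and>
     (\<forall>x. distributed M lborel (\<lambda>\<omega>. N \<omega> x) (\<lambda>t. ennreal (normal_density 0 \<sigma> t)))"

end

theory Submission imports Defs begin

text \<open>Writing R(g) for the residual sum of squares of g on D, the likelihood is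
  c exp(-R(g) / 2\<sigma>^2) with a constant c. Hence the Radon--Nikodym derivative is at most
  1 / E[exp(-R(S) / 2\<sigma>^2)], which by Jensen's inequality is at most exp(E[R(S)] / 2\<sigma>^2);
  and E[R(S)] \<le> 2nV + 2 \<Sigma> y_i^2 is controlled by the size of D. For the lower bound,
  the derivative averages to 1 along the prior, so its supremum is at least 1.\<close>

definition residual_ss :: "dataset \<Rightarrow> (real \<Rightarrow> real) \<Rightarrow> real" where
  "residual_ss D g = sum_list (map (\<lambda>(x, y). (g x - y)\<^sup>2) D)"

definition target_ss :: "dataset \<Rightarrow> real" where
  "target_ss D = sum_list (map (\<lambda>(x, y). y\<^sup>2) D)"

lemma residual_ss_simps [simp]:
  "residual_ss [] g = 0"
  "residual_ss ((x, y) # D) g = (g x - y)\<^sup>2 + residual_ss D g"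
  by (simp_all add: residual_ss_def)

lemma target_ss_simps [simp]:
  "target_ss [] = 0"
  "target_ss ((x, y) # D) = y\<^sup>2 + target_ss D"
  by (simp_all add: target_ss_def)

lemma data_size_simps [simp]:
  "data_size [] = 0"
  "data_size ((x, y) # D) = max \<bar>y\<bar> 1 + data_size D"
  by (simp_all add: data_size_def)

lemma residual_ss_nonneg: "0 \<le> residual_ss D g"
  by (induction D) auto

lemma data_size_nonneg: "0 \<le> data_size D"
  by (induction D) (auto simp: max_def)

lemma one_le_data_size: "D \<noteq> [] \<Longrightarrow> 1 \<le> data_size D"
  by (cases D) (auto simp: data_size_nonneg add_increasing2)

lemma length_le_data_size: "real (length D) \<le> data_size D"
  by (induction D) auto

lemma target_ss_le_data_size_sq: "target_ss D \<le> (data_size D)\<^sup>2"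
proof (induction D)
  case Nil
  then show ?case by simp
next
  case (Cons p D)
  obtain x y where p: "p = (x, y)" by fastforce
  have "y\<^sup>2 \<le> (max \<bar>y\<bar> 1)\<^sup>2"
    using abs_le_square_iff[of y "max \<bar>y\<bar> 1"] by simp
  moreover have "0 \<le> max \<bar>y\<bar> 1 * data_size D"
    using data_size_nonneg[of D] by simp
  ultimately show ?case
    using Cons p by (simp add: power2_eq_square algebra_simps)
qed

lemma length_target_ss_le_data_size_bound:
  assumes "data_size D \<le> B" and "0 \<le> V"
  shows "real (length D) * V + target_ss D \<le> 2 * B\<^sup>2 * V + B ^ 3"
proof (cases "D = []")
  case True
  then show ?thesis
    using assms data_size_nonneg[of D] by simp
next
  case False
  have B1: "1 \<le> B"
    using one_le_data_size[OF False] assms(1) by simp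
  have "real (length D) * V \<le> B\<^sup>2 * V"
    using length_le_data_size[of D] assms B1 power_increasing[of 1 2 B]
    by (intro mult_right_mono) auto
  moreover have "target_ss D \<le> B ^ 3"
  proof -
    have "(data_size D)\<^sup>2 \<le> B\<^sup>2"
      using assms(1) data_size_nonneg[of D] by (intro power_mono)
    then have "target_ss D \<le> B\<^sup>2"
      using target_ss_le_data_size_sq[of D] by linarith
    also have "\<dots> \<le> B ^ 3"
      using B1 by (simp add: power_increasing)
    finally show ?thesis .
  qed
  ultimately show ?thesis
    using assms(2) zero_le_power2[of B] mult_nonneg_nonneg[of "B\<^sup>2" V] by linarith
qed

lemma gauss_lik_eq_exp_residual_ss:
  "gauss_lik \<sigma> D g = (1 / sqrt (2 * pi * \<sigma>\<^sup>2)) ^ length D * exp (- residual_ss D g / (2 * \<sigma>\<^sup>2))"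
proof (induction D)
  case Nil
  then show ?case by (simp add: gauss_lik_def)
next
  case (Cons p D)
  obtain x y where p: "p = (x, y)" by fastforce
  have "gauss_lik \<sigma> (p # D) g = normal_density y \<sigma> (g x) * gauss_lik \<sigma> D g"
    by (simp add: gauss_lik_def p)
  also have "\<dots> = (1 / sqrt (2 * pi * \<sigma>\<^sup>2)) ^ length (p # D) *
      (exp (- (g x - y)\<^sup>2 / (2 * \<sigma>\<^sup>2)) * exp (- residual_ss D g / (2 * \<sigma>\<^sup>2)))"
    using Cons by (simp add: normal_density_def)
  also have "exp (- (g x - y)\<^sup>2 / (2 * \<sigma>\<^sup>2)) * exp (- residual_ss D g / (2 * \<sigma>\<^sup>2))
      = exp (- residual_ss (p # D) g / (2 * \<sigma>\<^sup>2))"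
    by (simp add: p exp_add[symmetric] add_divide_distrib diff_divide_distrib)
  finally show ?case .
qed

lemma gauss_lik_pos: "\<sigma> \<noteq> 0 \<Longrightarrow> 0 < gauss_lik \<sigma> D g"
  by (simp add: gauss_lik_eq_exp_residual_ss)

lemma gauss_lik_nonneg: "0 \<le> gauss_lik \<sigma> D g"
  by (simp add: gauss_lik_eq_exp_residual_ss)

lemma gauss_lik_le_const: "gauss_lik \<sigma> D g \<le> (1 / sqrt (2 * pi * \<sigma>\<^sup>2)) ^ length D"
proof -
  have "exp (- residual_ss D g / (2 * \<sigma>\<^sup>2)) \<le> 1"
    using residual_ss_nonneg[of D g] by (simp add: divide_nonneg_nonneg)
  then show ?thesis
    unfolding gauss_lik_eq_exp_residual_ss by (simp add: mult_left_le)
qed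

lemma borel_measurable_residual_ss:
  assumes "\<And>x. (\<lambda>\<omega>. S \<omega> x) \<in> borel_measurable M"
  shows "(\<lambda>\<omega>. residual_ss D (S \<omega>)) \<in> borel_measurable M"
proof (induction D)
  case Nil
  then show ?case by simp
next
  case (Cons p D)
  obtain x y where p: "p = (x, y)" by fastforce
  show ?case
    unfolding p residual_ss_simps using Cons assms[of x] by measurable
qed

lemma borel_measurable_gauss_lik:
  assumes "\<And>x. (\<lambda>\<omega>. S \<omega> x) \<in> borel_measurable M"
  shows "(\<lambda>\<omega>. gauss_lik \<sigma> D (S \<omega>)) \<in> borel_measurable M"
  unfolding gauss_lik_eq_exp_residual_ss using borel_measurable_residual_ss[OF assms] by measurable

context prob_space
begin

lemma integrable_gauss_lik:
  assumes "\<And>x. (\<lambda>\<omega>. S \<omega> x) \<in> borel_measurable M"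
  shows "integrable M (\<lambda>\<omega>. gauss_lik \<sigma> D (S \<omega>))"
proof (rule integrable_const_bound)
  show "AE \<omega> in M. norm (gauss_lik \<sigma> D (S \<omega>)) \<le> (1 / sqrt (2 * pi * \<sigma>\<^sup>2)) ^ length D"
    by (simp add: gauss_lik_nonneg gauss_lik_le_const)
qed (rule borel_measurable_gauss_lik[OF assms])

lemma integral_gauss_lik_pos:
  assumes "\<sigma> \<noteq> 0" and "\<And>x. (\<lambda>\<omega>. S \<omega> x) \<in> borel_measurable M"
  shows "0 < (\<integral>\<omega>. gauss_lik \<sigma> D (S \<omega>) \<partial>M)"
proof -
  have pos: "0 < gauss_lik \<sigma> D (S \<omega>)" for \<omega>
    using assms(1) by (rule gauss_lik_pos)
  have "(\<integral>\<omega>. gauss_lik \<sigma> D (S \<omega>) \<partial>M) \<noteq> 0"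
  proof
    assume "(\<integral>\<omega>. gauss_lik \<sigma> D (S \<omega>) \<partial>M) = 0"
    then have "AE \<omega> in M. gauss_lik \<sigma> D (S \<omega>) = 0"
      using integral_nonneg_eq_0_iff_AE[OF integrable_gauss_lik[OF assms(2)]] pos
      by (simp add: less_imp_le)
    then show False
      using pos by (simp add: less_le)
  qed
  moreover have "0 \<le> (\<integral>\<omega>. gauss_lik \<sigma> D (S \<omega>) \<partial>M)"
    using pos by (simp add: less_imp_le)
  ultimately show ?thesis by simp
qed

lemma one_le_SUP_post_rn:
  assumes "\<sigma> \<noteq> 0" and meas: "\<And>x. (\<lambda>\<omega>. S \<omega> x) \<in> borel_measurable M"
  shows "1 \<le> (SUP g. ereal (post_rn M S \<sigma> D g))"
proof (cases "D = []")
  case True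
  then show ?thesis by (simp add: post_rn_def)
next
  case False
  define I where "I = (\<integral>\<omega>. gauss_lik \<sigma> D (S \<omega>) \<partial>M)"
  have I_pos: "0 < I"
    unfolding I_def using assms by (rule integral_gauss_lik_pos)
  show ?thesis
  proof (cases "(SUP g. ereal (post_rn M S \<sigma> D g))")
    case (real r)
    have "gauss_lik \<sigma> D (S \<omega>) \<le> r * I" for \<omega>
    proof -
      have "ereal (post_rn M S \<sigma> D (S \<omega>)) \<le> ereal r"
        using real by (metis SUP_upper UNIV_I)
      then show ?thesis
        using False I_pos by (simp add: post_rn_def I_def[symmetric] divide_le_eq)
    qed
    then have "I \<le> (\<integral>\<omega>. r * I \<partial>M)"
      unfolding I_def by (intro integral_mono integrable_gauss_lik meas) auto
    then have "1 * I \<le> r * I"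
      by (simp add: prob_space)
    then show ?thesis
      using real I_pos by simp
  qed (auto simp: SUP_eq_iff)
qed

lemma
  fixes X :: "'a \<Rightarrow> real"
  assumes [measurable]: "X \<in> borel_measurable M" and sq: "integrable M (\<lambda>\<omega>. (X \<omega>)\<^sup>2)"
  shows integrable_sq_diff: "integrable M (\<lambda>\<omega>. (X \<omega> - y)\<^sup>2)"
    and integral_sq_diff_le: "(\<integral>\<omega>. (X \<omega> - y)\<^sup>2 \<partial>M) \<le> 2 * (\<integral>\<omega>. (X \<omega>)\<^sup>2 \<partial>M) + 2 * y\<^sup>2"
proof -
  have bound: "(X \<omega> - y)\<^sup>2 \<le> 2 * (X \<omega>)\<^sup>2 + 2 * y\<^sup>2" for \<omega>
    using sum_squares_ge_zero[of "X \<omega> + y" 0] by (simp add: power2_eq_square algebra_simps)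
  have majorant: "integrable M (\<lambda>\<omega>. 2 * (X \<omega>)\<^sup>2 + 2 * y\<^sup>2)"
    using sq by simp
  show int: "integrable M (\<lambda>\<omega>. (X \<omega> - y)\<^sup>2)"
    by (rule Bochner_Integration.integrable_bound[OF majorant]) (auto intro!: AE_I2 simp: bound)
  have "(\<integral>\<omega>. (X \<omega> - y)\<^sup>2 \<partial>M) \<le> (\<integral>\<omega>. 2 * (X \<omega>)\<^sup>2 + 2 * y\<^sup>2 \<partial>M)"
    by (rule integral_mono[OF int majorant bound])
  also have "\<dots> = 2 * (\<integral>\<omega>. (X \<omega>)\<^sup>2 \<partial>M) + 2 * y\<^sup>2"
    using sq by (simp add: prob_space)
  finally show "(\<integral>\<omega>. (X \<omega> - y)\<^sup>2 \<partial>M) \<le> 2 * (\<integral>\<omega>. (X \<omega>)\<^sup>2 \<partial>M) + 2 * y\<^sup>2" .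
qed

lemma integrable_residual_ss:
  assumes meas: "\<And>x. (\<lambda>\<omega>. S \<omega> x) \<in> borel_measurable M"
    and sq: "\<And>x. integrable M (\<lambda>\<omega>. (S \<omega> x)\<^sup>2)"
  shows "integrable M (\<lambda>\<omega>. residual_ss D (S \<omega>))"
proof (induction D)
  case Nil
  then show ?case by simp
next
  case (Cons p D)
  obtain x y where p: "p = (x, y)" by fastforce
  show ?case
    unfolding p residual_ss_simps using Cons integrable_sq_diff[OF meas sq] by simp
qed

lemma integral_residual_ss_le:
  assumes meas: "\<And>x. (\<lambda>\<omega>. S \<omega> x) \<in> borel_measurable M"
    and sq: "\<And>x. integrable M (\<lambda>\<omega>. (S \<omega> x)\<^sup>2)"
    and V: "\<And>x. (\<integral>\<omega>. (S \<omega> x)\<^sup>2 \<partial>M) \<le> V"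
  shows "(\<integral>\<omega>. residual_ss D (S \<omega>) \<partial>M) \<le> 2 * (real (length D) * V + target_ss D)"
proof (induction D)
  case Nil
  then show ?case by simp
next
  case (Cons p D)
  obtain x y where p: "p = (x, y)" by fastforce
  have "(\<integral>\<omega>. residual_ss (p # D) (S \<omega>) \<partial>M)
      = (\<integral>\<omega>. (S \<omega> x - y)\<^sup>2 \<partial>M) + (\<integral>\<omega>. residual_ss D (S \<omega>) \<partial>M)"
    unfolding p residual_ss_simps
    using integrable_sq_diff[OF meas sq] integrable_residual_ss[OF meas sq] by simp
  also have "\<dots> \<le> (2 * V + 2 * y\<^sup>2) + 2 * (real (length D) * V + target_ss D)"
    using integral_sq_diff_le[OF meas sq, of x y] V[of x] Cons by linarith
  finally show ?case
    using p by (simp add: algebra_simps)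
qed

lemma post_rn_le_exp_integral_residual_ss:
  assumes "\<sigma> \<noteq> 0" and meas: "\<And>x. (\<lambda>\<omega>. S \<omega> x) \<in> borel_measurable M"
    and int: "integrable M (\<lambda>\<omega>. residual_ss D (S \<omega>))"
  shows "post_rn M S \<sigma> D g \<le> exp ((\<integral>\<omega>. residual_ss D (S \<omega>) \<partial>M) / (2 * \<sigma>\<^sup>2))"
proof (cases "D = []")
  case True
  then show ?thesis by (simp add: post_rn_def)
next
  case False
  define k where "k = 2 * \<sigma>\<^sup>2"
  define c where "c = (1 / sqrt (2 * pi * \<sigma>\<^sup>2)) ^ length D"
  define E where "E = (\<integral>\<omega>. exp (- residual_ss D (S \<omega>) / k) \<partial>M)"
  have k_pos: "0 < k" and c_pos: "0 < c"
    using assms(1) by (simp_all add: k_def c_def)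
  have "(\<lambda>\<omega>. exp (- residual_ss D (S \<omega>) / k)) \<in> borel_measurable M"
    using borel_measurable_residual_ss[OF meas] by measurable
  then have "integrable M (\<lambda>\<omega>. exp (- residual_ss D (S \<omega>) / k))"
    using k_pos residual_ss_nonneg by (intro integrable_const_bound[where B = 1] AE_I2) auto
  then have "exp (\<integral>\<omega>. - residual_ss D (S \<omega>) / k \<partial>M) \<le> E"
    unfolding E_def using int exp_convex by (intro jensens_inequality[where I = UNIV]) auto
  then have jensen: "exp (- (\<integral>\<omega>. residual_ss D (S \<omega>) \<partial>M) / k) \<le> E"
    by simp
  then have E_pos: "0 < E"
    using exp_gt_zero less_le_trans by blast
  have "post_rn M S \<sigma> D g = c * exp (- residual_ss D g / k) / (c * E)"
    using False unfolding post_rn_def gauss_lik_eq_exp_residual_ss c_def k_def E_def by simp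
  also have "\<dots> \<le> 1 / E"
    using c_pos E_pos k_pos residual_ss_nonneg[of D g]
    by (simp add: divide_right_mono divide_nonneg_nonneg)
  also have "\<dots> \<le> 1 / exp (- (\<integral>\<omega>. residual_ss D (S \<omega>) \<partial>M) / k)"
    using jensen E_pos by (intro divide_left_mono) auto
  also have "\<dots> = exp ((\<integral>\<omega>. residual_ss D (S \<omega>) \<partial>M) / k)"
    by (simp add: exp_minus flip: inverse_eq_divide)
  finally show ?thesis
    by (simp add: k_def)
qed

lemma post_rn_le_exp_data_size_bound:
  assumes "\<sigma> \<noteq> 0" and meas: "\<And>x. (\<lambda>\<omega>. S \<omega> x) \<in> borel_measurable M"
    and sq: "\<And>x. integrable M (\<lambda>\<omega>. (S \<omega> x)\<^sup>2)"
    and V: "\<And>x. (\<integral>\<omega>. (S \<omega> x)\<^sup>2 \<partial>M) \<le> V"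
    and "data_size D \<le> B"
  shows "post_rn M S \<sigma> D g \<le> exp (2 * B\<^sup>2 * V / \<sigma>\<^sup>2 + B ^ 3 / \<sigma>\<^sup>2)"
proof -
  have "0 \<le> (\<integral>\<omega>. (S \<omega> x)\<^sup>2 \<partial>M)" for x
    by (intro Bochner_Integration.integral_nonneg) simp
  then have V_nonneg: "0 \<le> V"
    using V order_trans by blast
  have "(\<integral>\<omega>. residual_ss D (S \<omega>) \<partial>M) \<le> 2 * (2 * B\<^sup>2 * V + B ^ 3)"
    using integral_residual_ss_le[of S V D, OF meas sq V]
      length_target_ss_le_data_size_bound[OF assms(5) V_nonneg] by (smt (verit))
  then have "(\<integral>\<omega>. residual_ss D (S \<omega>) \<partial>M) / (2 * \<sigma>\<^sup>2)
      \<le> 2 * B\<^sup>2 * V / \<sigma>\<^sup>2 + B ^ 3 / \<sigma>\<^sup>2"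
    using assms(1) by (simp add: field_simps)
  then show ?thesis
    using post_rn_le_exp_integral_residual_ss[OF assms(1) meas integrable_residual_ss[OF meas sq]]
    by (meson exp_le_cancel_iff order_trans)
qed

lemma
  fixes X :: "'i \<Rightarrow> 'a \<Rightarrow> real"
  assumes [measurable]: "\<And>i. X i \<in> borel_measurable M"
    and finite: "(SUP i. \<integral>\<^sup>+ \<omega>. ennreal ((X i \<omega>)\<^sup>2) \<partial>M) < \<infinity>"
  shows integrable_sq_of_SUP_nn_integral_finite: "integrable M (\<lambda>\<omega>. (X i \<omega>)\<^sup>2)"
    and integral_sq_le_SUP_nn_integral:
      "(\<integral>\<omega>. (X i \<omega>)\<^sup>2 \<partial>M) \<le> enn2real (SUP i. \<integral>\<^sup>+ \<omega>. ennreal ((X i \<omega>)\<^sup>2) \<partial>M)"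
proof -
  have le: "(\<integral>\<^sup>+ \<omega>. ennreal ((X i \<omega>)\<^sup>2) \<partial>M) \<le> (SUP i. \<integral>\<^sup>+ \<omega>. ennreal ((X i \<omega>)\<^sup>2) \<partial>M)"
    by (rule SUP_upper) simp
  then show "integrable M (\<lambda>\<omega>. (X i \<omega>)\<^sup>2)"
    using finite by (simp add: integrable_iff_bounded)
  have "(\<integral>\<omega>. (X i \<omega>)\<^sup>2 \<partial>M) = enn2real (\<integral>\<^sup>+ \<omega>. ennreal ((X i \<omega>)\<^sup>2) \<partial>M)"
    by (intro integral_eq_nn_integral) auto
  also have "\<dots> \<le> enn2real (SUP i. \<integral>\<^sup>+ \<omega>. ennreal ((X i \<omega>)\<^sup>2) \<partial>M)"
    using le finite by (intro enn2real_mono) auto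
  finally show "(\<integral>\<omega>. (X i \<omega>)\<^sup>2 \<partial>M) \<le> enn2real (SUP i. \<integral>\<^sup>+ \<omega>. ennreal ((X i \<omega>)\<^sup>2) \<partial>M)" .
qed

end

theorem mainTheorem8:
  fixes M :: "'a measure" and f S N :: "'a \<Rightarrow> real \<Rightarrow> real" and \<sigma> :: real
    and Dt :: "dataset set"
  assumes "noisy_process M f S N \<sigma>"
    and "(SUP x. \<integral>\<^sup>+ \<omega>. ennreal ((S \<omega> x)\<^sup>2) \<partial>M) < \<infinity>"
    and "Dt \<noteq> {}" and "bounded_data Dt"
  shows "1 \<le> (SUP D\<in>Dt. SUP g. ereal (post_rn M S \<sigma> D g))
    \<and> (SUP D\<in>Dt. SUP g. ereal (post_rn M S \<sigma> D g))
        \<le> ereal (2 * exp (2 * (data_norm Dt)\<^sup>2 * enn2real (SUP x. \<integral>\<^sup>+ \<omega>. ennreal ((S \<omega> x)\<^sup>2) \<partial>M) / \<sigma>\<^sup>2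
                       + (data_norm Dt) ^ 3 / \<sigma>\<^sup>2))"
proof -
  interpret prob_space M
    using assms(1) by (simp add: noisy_process_def)
  have "\<sigma> \<noteq> 0" and meas: "\<And>x. (\<lambda>\<omega>. S \<omega> x) \<in> borel_measurable M"
    using assms(1) by (auto simp: noisy_process_def)
  define V where "V = enn2real (SUP x. \<integral>\<^sup>+ \<omega>. ennreal ((S \<omega> x)\<^sup>2) \<partial>M)"
  define B where "B = data_norm Dt"
  have "data_size D \<le> B" if "D \<in> Dt" for D
    using assms(4) that unfolding B_def data_norm_def bounded_data_def by (intro cSup_upper) auto
  then have "post_rn M S \<sigma> D g \<le> exp (2 * B\<^sup>2 * V / \<sigma>\<^sup>2 + B ^ 3 / \<sigma>\<^sup>2)" if "D \<in> Dt" for D g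
    using integrable_sq_of_SUP_nn_integral_finite[where X = "\<lambda>x \<omega>. S \<omega> x", OF meas assms(2)]
      integral_sq_le_SUP_nn_integral[where X = "\<lambda>x \<omega>. S \<omega> x", OF meas assms(2)] that
    by (intro post_rn_le_exp_data_size_bound[OF \<open>\<sigma> \<noteq> 0\<close> meas]) (auto simp: V_def)
  then have "(SUP D\<in>Dt. SUP g. ereal (post_rn M S \<sigma> D g)) \<le> ereal (2 * exp (2 * B\<^sup>2 * V / \<sigma>\<^sup>2 + B ^ 3 / \<sigma>\<^sup>2))"
    by (intro SUP_least) (smt (verit) ereal_less_eq(3) exp_gt_zero)
  moreover obtain D0 where "D0 \<in> Dt"
    using assms(3) by blast
  then have "1 \<le> (SUP D\<in>Dt. SUP g. ereal (post_rn M S \<sigma> D g))"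
    using one_le_SUP_post_rn[of \<sigma> S D0, OF \<open>\<sigma> \<noteq> 0\<close> meas] by (blast intro: SUP_upper2)
  ultimately show ?thesis
    unfolding B_def V_def by blast
qed

end
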